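(* Let $\Lambda:\mathbb{R}\to[0,1]$ be a right-continuous decreasing function, $n\in\mathbb N$, $\Theta$ a convex set, $f:\Theta\times\mathbb{R}^n\to\mathbb{R}$, $\mathbf L\in(L^\infty)^n$ such that $f(\boldsymbol\theta,\mathbf L)\in L^\infty$ for all $\boldsymbol\theta\in\Theta$, and $\ell\in\mathbb{R}$. Then for every $\boldsymbol\theta\in\Theta$, $\mathrm{ES}_\Lambda(f(\boldsymbol\theta,\mathbf L))\le\ell$ if and only if $\mathrm{ES}_{\Lambda(\ell)}(f(\boldsymbol\theta,\mathbf L))\le\ell$.
   Context: $(\Omega,\mathcal F,\mathbb P)$ is an atomless probability space, $L^\infty$ the essentially bounded random variables; "decreasing" is weak; $\wedge=\min$. For $\alpha\in[0,1]$: $\mathrm{VaR}_\alpha(X)=\inf\{x\in\mathbb{R}:\mathbb P(X\le x)\ge\alpha\}$; $\mathrm{ES}_\alpha(X)=\frac{1}{1-\alpha}\int_\alpha^1\mathrm{VaR}_\beta(X)\,\mathrm d\beta$ for $\alpha<1$, $\mathrm{ES}_1(X)=\mathrm{VaR}_1(X)$; for decreasing $\Lambda:\mathbb{R}\to[0,1]$, $\mathrm{ES}_\Lambda(X)=\sup_{x\in\mathbb{R}}\left(\mathrm{ES}_{\Lambda(x)}(X)\wedge x\right)$, $X\in L^\infty$. *)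

theory Defs
  imports "HOL-Probability.Probability"
begin

definition atomless :: "'a measure \<Rightarrow> bool" where
  "atomless M \<longleftrightarrow> (\<forall>A\<in>sets M. measure M A > 0 \<longrightarrow>
      (\<exists>B\<in>sets M. B \<subseteq> A \<and> 0 < measure M B \<and> measure M B < measure M A))"

definition Linf :: "'a measure \<Rightarrow> ('a \<Rightarrow> real) set" where
  "Linf M = {X. X \<in> borel_measurable M \<and> (\<exists>C. AE \<omega> in M. \<bar>X \<omega>\<bar> \<le> C)}"

text \<open>For \<alpha> = 0 the mathematical value is -\<infinity>;
  here Inf of an unbounded set is an unspecified real, which is irrelevant
  since VaR at a single level does not affect the ES integrals below.\<close>
definition VaR :: "'a measure \<Rightarrow> real \<Rightarrow> ('a \<Rightarrow> real) \<Rightarrow> real" where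
  "VaR M \<alpha> X = Inf {x. measure M {\<omega> \<in> space M. X \<omega> \<le> x} \<ge> \<alpha>}"

definition ES :: "'a measure \<Rightarrow> real \<Rightarrow> ('a \<Rightarrow> real) \<Rightarrow> real" where
  "ES M \<alpha> X = (if \<alpha> < 1 then (1 / (1 - \<alpha>)) * integral {\<alpha>..1} (\<lambda>\<beta>. VaR M \<beta> X)
                else VaR M 1 X)"

definition ES_Lambda :: "'a measure \<Rightarrow> (real \<Rightarrow> real) \<Rightarrow> ('a \<Rightarrow> real) \<Rightarrow> real" where
  "ES_Lambda M \<Lambda> X = (SUP x\<in>(UNIV::real set). min (ES M (\<Lambda> x) X) x)"

end

theory Submission
  imports Defs
begin

text \<open>For bounded X, ES_\<alpha>(X) is the average over [\<alpha>, 1] of the bounded nondecreasing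
  quantile function \<beta> \<mapsto> VaR_\<beta>(X). Hence \<alpha> \<mapsto> ES_\<alpha>(X) is nondecreasing, and it is
  left-continuous on (0, 1]: below 1 because the integrand is bounded, at 1 because VaR is
  left-continuous. Monotonicity gives ES_\<Lambda>(X) \<le> l iff ES_\<Lambda>(x)(X) \<le> l for all x > l.
  As x decreases to l, \<Lambda>(x) increases to \<Lambda>(l) by right-continuity, so left-continuity of ES
  turns this into ES_\<Lambda>(l)(X) \<le> l.\<close>

locale bounded_random_variable = prob_space M for M :: "'a measure" +
  fixes X :: "'a \<Rightarrow> real" and C :: real
  assumes X_measurable: "X \<in> borel_measurable M"
    and AE_abs_le: "AE \<omega> in M. \<bar>X \<omega>\<bar> \<le> C"
begin

definition distribution_fun :: "real \<Rightarrow> real" where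
  "distribution_fun x = prob {\<omega> \<in> space M. X \<omega> \<le> x}"

lemma sets_X_le: "{\<omega> \<in> space M. X \<omega> \<le> x} \<in> sets M"
  using X_measurable by measurable

lemma distribution_fun_at_bound: "distribution_fun C = 1"
proof -
  have "AE \<omega> in M. \<omega> \<in> {\<omega> \<in> space M. X \<omega> \<le> C}"
    using AE_space AE_abs_le by eventually_elim auto
  then show ?thesis
    unfolding distribution_fun_def using prob_eq_1 sets_X_le by blast
qed

lemma distribution_fun_below_bound: "x < -C \<Longrightarrow> distribution_fun x = 0"
proof -
  assume "x < -C"
  have "AE \<omega> in M. \<omega> \<notin> {\<omega> \<in> space M. X \<omega> \<le> x}"
    using AE_space AE_abs_le by eventually_elim (use \<open>x < -C\<close> in auto)
  then show ?thesis
    unfolding distribution_fun_def using prob_eq_0 sets_X_le by blast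
qed

lemma distribution_fun_mono: "x \<le> y \<Longrightarrow> distribution_fun x \<le> distribution_fun y"
  unfolding distribution_fun_def by (rule finite_measure_mono) (use sets_X_le in auto)

lemma VaR_eq_Inf: "VaR M \<beta> X = Inf {x. \<beta> \<le> distribution_fun x}"
  unfolding VaR_def distribution_fun_def by simp

lemma bdd_below_level_set: "0 < \<beta> \<Longrightarrow> bdd_below {x. \<beta> \<le> distribution_fun x}"
  unfolding bdd_below_def using distribution_fun_below_bound by (metis mem_Collect_eq not_le)

lemma VaR_le_if_le_distribution_fun: "0 < \<beta> \<Longrightarrow> \<beta> \<le> distribution_fun y \<Longrightarrow> VaR M \<beta> X \<le> y"
  unfolding VaR_eq_Inf by (rule cInf_lower) (auto intro: bdd_below_level_set)

lemma le_distribution_fun_if_VaR_less: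
  assumes "0 < \<beta>" "\<beta> \<le> 1" "VaR M \<beta> X < y"
  shows "\<beta> \<le> distribution_fun y"
proof -
  have "C \<in> {x. \<beta> \<le> distribution_fun x}"
    using assms distribution_fun_at_bound by simp
  then obtain x where "\<beta> \<le> distribution_fun x" "x < y"
    using assms bdd_below_level_set cInf_less_iff[of "{x. \<beta> \<le> distribution_fun x}"]
    unfolding VaR_eq_Inf by auto
  then show ?thesis
    using distribution_fun_mono[of x y] by simp
qed

lemma VaR_ge_bound:
  assumes "0 < \<beta>" "\<beta> \<le> 1"
  shows "-C \<le> VaR M \<beta> X"
proof (rule ccontr)
  assume "\<not> -C \<le> VaR M \<beta> X"
  then obtain y where "VaR M \<beta> X < y" "y < -C"
    using dense[of "VaR M \<beta> X" "-C"] by auto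
  then have "\<beta> \<le> distribution_fun y"
    using assms by (intro le_distribution_fun_if_VaR_less)
  with \<open>y < -C\<close> \<open>0 < \<beta>\<close> show False
    using distribution_fun_below_bound[of y] by simp
qed

lemma VaR_mono:
  assumes "0 < \<beta>" "\<beta> \<le> \<beta>'" "\<beta>' \<le> 1"
  shows "VaR M \<beta> X \<le> VaR M \<beta>' X"
proof (rule dense_ge)
  fix y assume "VaR M \<beta>' X < y"
  then have "\<beta>' \<le> distribution_fun y"
    using assms by (intro le_distribution_fun_if_VaR_less) auto
  then show "VaR M \<beta> X \<le> y"
    using assms by (intro VaR_le_if_le_distribution_fun) auto
qed

lemma VaR_le_if_le_left:
  assumes "0 < a" "a \<le> 1" and left: "\<And>\<alpha>. 0 < \<alpha> \<Longrightarrow> \<alpha> < a \<Longrightarrow> VaR M \<alpha> X \<le> l"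
  shows "VaR M a X \<le> l"
proof (rule dense_ge)
  fix y assume "l < y"
  have "a \<le> distribution_fun y"
  proof (rule dense_le_bounded[OF \<open>0 < a\<close>])
    fix \<alpha> assume "0 < \<alpha>" "\<alpha> < a"
    then show "\<alpha> \<le> distribution_fun y"
      using left[of \<alpha>] \<open>l < y\<close> \<open>a \<le> 1\<close> by (intro le_distribution_fun_if_VaR_less) auto
  qed
  then show "VaR M a X \<le> y"
    using VaR_le_if_le_distribution_fun \<open>0 < a\<close> by blast
qed

text \<open>VaR on (0, 1], extended by constants to a monotone function on all of \<real>;
  VaR M 0 X itself is the junk value Inf \<real>.\<close>
definition quantile :: "real \<Rightarrow> real" where
  "quantile \<beta> = (if \<beta> \<le> 0 then -C else VaR M (min \<beta> 1) X)"

lemma quantile_ge_bound: "-C \<le> quantile \<beta>"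
  unfolding quantile_def using VaR_ge_bound[of "min \<beta> 1"] by auto

lemma mono_quantile: "mono quantile"
proof
  fix \<beta> \<beta>' :: real assume "\<beta> \<le> \<beta>'"
  then show "quantile \<beta> \<le> quantile \<beta>'"
    using quantile_ge_bound[of \<beta>'] VaR_mono[of "min \<beta> 1" "min \<beta>' 1"]
    by (cases "\<beta> \<le> 0") (simp_all add: quantile_def)
qed

lemma quantile_integrable: "quantile integrable_on {a..b}"
  using mono_quantile by (intro integrable_on_mono_on) (simp add: mono_on_def mono_def)

lemma integral_quantile_bounds:
  assumes "a \<le> b"
  shows "(b - a) * quantile a \<le> integral {a..b} quantile"
    and "integral {a..b} quantile \<le> (b - a) * quantile b"
proof -
  have "integral {a..b} (\<lambda>_. quantile a) \<le> integral {a..b} quantile"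
    and "integral {a..b} quantile \<le> integral {a..b} (\<lambda>_. quantile b)"
    by (rule integral_le; use quantile_integrable mono_quantile in \<open>auto simp: mono_def\<close>)+
  then show "(b - a) * quantile a \<le> integral {a..b} quantile"
    and "integral {a..b} quantile \<le> (b - a) * quantile b"
    using assms by (simp_all add: content_real)
qed

lemma integral_quantile_split:
  "a \<le> b \<Longrightarrow> b \<le> c \<Longrightarrow>
    integral {a..c} quantile = integral {a..b} quantile + integral {b..c} quantile"
  using Henstock_Kurzweil_Integration.integral_combine[OF _ _ quantile_integrable] by simp

lemma ES_eq_integral:
  assumes "0 \<le> \<alpha>" "\<alpha> < 1"
  shows "ES M \<alpha> X = integral {\<alpha>..1} quantile / (1 - \<alpha>)"
proof -
  have "integral {\<alpha>..1} (\<lambda>\<beta>. VaR M \<beta> X) = integral {\<alpha>..1} quantile"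
    by (rule integral_spike[of "{0}"]) (use assms in \<open>auto simp: quantile_def\<close>)
  then show ?thesis
    unfolding ES_def using assms by simp
qed

lemma ES_at_1: "ES M 1 X = quantile 1"
  unfolding ES_def quantile_def by simp

lemma ES_mono:
  assumes "0 \<le> \<alpha>" "\<alpha> \<le> \<alpha>'" "\<alpha>' \<le> 1"
  shows "ES M \<alpha> X \<le> ES M \<alpha>' X"
proof (cases "\<alpha>' = 1")
  case True
  show ?thesis
  proof (cases "\<alpha> = 1")
    case False
    with assms have "\<alpha> < 1" by simp
    then have "integral {\<alpha>..1} quantile / (1 - \<alpha>) \<le> quantile 1"
      using integral_quantile_bounds(2)[of \<alpha> 1] by (simp add: divide_simps mult.commute)
    then show ?thesis
      using ES_eq_integral ES_at_1 True assms \<open>\<alpha> < 1\<close> by simp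
  qed (use True in simp)
next
  case False
  with assms have "\<alpha> < 1" "\<alpha>' < 1" by simp_all
  define A B where "A = integral {\<alpha>..\<alpha>'} quantile" and "B = integral {\<alpha>'..1} quantile"
  \<comment> \<open>the average of quantile over [\<alpha>, \<alpha>'] is at most quantile \<alpha>', its average over [\<alpha>', 1] at least\<close>
  have "(1 - \<alpha>') * A \<le> (1 - \<alpha>') * ((\<alpha>' - \<alpha>) * quantile \<alpha>')"
    unfolding A_def using integral_quantile_bounds(2) assms \<open>\<alpha>' < 1\<close> by (intro mult_left_mono) auto
  also have "\<dots> = (\<alpha>' - \<alpha>) * ((1 - \<alpha>') * quantile \<alpha>')"
    by (simp add: algebra_simps)
  also have "\<dots> \<le> (\<alpha>' - \<alpha>) * B"
    unfolding B_def using integral_quantile_bounds(1) assms \<open>\<alpha>' < 1\<close> by (intro mult_left_mono) auto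
  finally have "(A + B) / (1 - \<alpha>) \<le> B / (1 - \<alpha>')"
    using \<open>\<alpha> < 1\<close> \<open>\<alpha>' < 1\<close> by (simp add: divide_simps) (simp add: algebra_simps)
  then show ?thesis
    using ES_eq_integral integral_quantile_split[of \<alpha> \<alpha>' 1] assms \<open>\<alpha> < 1\<close> \<open>\<alpha>' < 1\<close>
    unfolding A_def B_def by simp
qed

lemma VaR_le_ES:
  assumes "0 < \<alpha>" "\<alpha> \<le> 1"
  shows "VaR M \<alpha> X \<le> ES M \<alpha> X"
proof (cases "\<alpha> = 1")
  case False
  with assms have "\<alpha> < 1" by simp
  then have "quantile \<alpha> \<le> integral {\<alpha>..1} quantile / (1 - \<alpha>)"
    using integral_quantile_bounds(1)[of \<alpha> 1] by (simp add: divide_simps mult.commute)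
  then show ?thesis
    using ES_eq_integral assms \<open>\<alpha> < 1\<close> by (simp add: quantile_def)
qed (simp add: ES_def)

lemma ES_le_if_le_left:
  assumes "0 < a" "a \<le> 1" and left: "\<And>\<alpha>. 0 < \<alpha> \<Longrightarrow> \<alpha> < a \<Longrightarrow> ES M \<alpha> X \<le> l"
  shows "ES M a X \<le> l"
proof (cases "a = 1")
  case True
  have "VaR M a X \<le> l"
  proof (rule VaR_le_if_le_left[OF assms(1,2)])
    fix \<alpha> assume "0 < \<alpha>" "\<alpha> < a"
    then have "VaR M \<alpha> X \<le> ES M \<alpha> X"
      using \<open>a \<le> 1\<close> by (intro VaR_le_ES) auto
    also have "\<dots> \<le> l"
      using left \<open>0 < \<alpha>\<close> \<open>\<alpha> < a\<close> .
    finally show "VaR M \<alpha> X \<le> l" .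
  qed
  then show ?thesis
    using True by (simp add: ES_def)
next
  case False
  with assms have "a < 1" by simp
  have bound: "integral {a..1} quantile \<le> l * (1 - \<alpha>) + C * (a - \<alpha>)"
    if "0 < \<alpha>" "\<alpha> < a" for \<alpha>
  proof -
    have "integral {\<alpha>..1} quantile / (1 - \<alpha>) \<le> l"
      using left[OF that] ES_eq_integral[of \<alpha>] that \<open>a < 1\<close> by simp
    then have "integral {\<alpha>..1} quantile \<le> l * (1 - \<alpha>)"
      using that \<open>a < 1\<close> by (simp add: pos_divide_le_eq)
    moreover have "(a - \<alpha>) * -C \<le> (a - \<alpha>) * quantile \<alpha>"
      using quantile_ge_bound that by (intro mult_left_mono) auto
    ultimately show ?thesis
      using integral_quantile_split[of \<alpha> a 1] integral_quantile_bounds(1)[of \<alpha> a] that \<open>a < 1\<close>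
      by (simp add: algebra_simps)
  qed
  have "\<forall>\<^sub>F \<alpha> in at_left a. integral {a..1} quantile \<le> l * (1 - \<alpha>) + C * (a - \<alpha>)"
    unfolding eventually_at_left_field using bound \<open>0 < a\<close> by blast
  moreover have "((\<lambda>\<alpha>. l * (1 - \<alpha>) + C * (a - \<alpha>)) \<longlongrightarrow> l * (1 - a) + C * (a - a)) (at_left a)"
    by (intro tendsto_intros)
  ultimately have "integral {a..1} quantile \<le> l * (1 - a)"
    using tendsto_le[OF trivial_limit_at_left_real _ tendsto_const] by fastforce
  then show ?thesis
    using ES_eq_integral assms \<open>a < 1\<close> by (simp add: pos_divide_le_eq)
qed

lemma ES_Lambda_le_iff_right:
  assumes range: "\<And>x. \<Lambda> x \<in> {0..1}"
  shows "ES_Lambda M \<Lambda> X \<le> l \<longleftrightarrow> (\<forall>x>l. ES M (\<Lambda> x) X \<le> l)"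
proof -
  have "min (ES M (\<Lambda> x) X) x \<le> ES M 1 X" for x
    using ES_mono[of "\<Lambda> x" 1] range[of x] by (simp add: min.coboundedI1)
  then have "bdd_above (range (\<lambda>x. min (ES M (\<Lambda> x) X) x))"
    by (intro bdd_aboveI2)
  then have "ES_Lambda M \<Lambda> X \<le> l \<longleftrightarrow> (\<forall>x. min (ES M (\<Lambda> x) X) x \<le> l)"
    unfolding ES_Lambda_def by (simp add: cSUP_le_iff)
  also have "\<dots> \<longleftrightarrow> (\<forall>x>l. ES M (\<Lambda> x) X \<le> l)"
  proof (intro iffI allI impI)
    fix x assume "\<forall>x. min (ES M (\<Lambda> x) X) x \<le> l" "l < x"
    then show "ES M (\<Lambda> x) X \<le> l"
      by (metis min_le_iff_disj not_le)
  next
    fix x assume "\<forall>x>l. ES M (\<Lambda> x) X \<le> l"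
    then show "min (ES M (\<Lambda> x) X) x \<le> l"
      by (cases "x \<le> l") (simp_all add: min.coboundedI1 min.coboundedI2)
  qed
  finally show ?thesis .
qed

lemma ES_Lambda_le_iff:
  assumes range: "\<And>x. \<Lambda> x \<in> {0..1}" and "antimono \<Lambda>"
    and right_cont: "\<And>x. continuous (at_right x) \<Lambda>"
  shows "ES_Lambda M \<Lambda> X \<le> l \<longleftrightarrow> ES M (\<Lambda> l) X \<le> l"
  unfolding ES_Lambda_le_iff_right[OF range]
proof
  assume right: "\<forall>x>l. ES M (\<Lambda> x) X \<le> l"
  show "ES M (\<Lambda> l) X \<le> l"
  proof (cases "\<Lambda> l = 0")
    case True
    then have "\<Lambda> (l + 1) = 0"
      using range[of "l + 1"] antimonoD[OF \<open>antimono \<Lambda>\<close>, of l "l + 1"] by simp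
    then show ?thesis
      using right True by (metis less_add_one)
  next
    case False
    then have "0 < \<Lambda> l"
      using range[of l] by simp
    show ?thesis
    proof (rule ES_le_if_le_left[OF \<open>0 < \<Lambda> l\<close>])
      show "\<Lambda> l \<le> 1"
        using range[of l] by simp
      fix \<alpha> assume "0 < \<alpha>" "\<alpha> < \<Lambda> l"
      have "(\<Lambda> \<longlongrightarrow> \<Lambda> l) (at_right l)"
        using right_cont[of l] by (simp add: continuous_within)
      then have "\<forall>\<^sub>F y in at_right l. \<alpha> < \<Lambda> y"
        using \<open>\<alpha> < \<Lambda> l\<close> by (rule order_tendstoD)
      then have "\<forall>\<^sub>F y in at_right l. \<alpha> < \<Lambda> y \<and> l < y"
        using eventually_at_right_less by (rule eventually_conj)
      then obtain y where "\<alpha> < \<Lambda> y" "l < y"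
        using eventually_happens'[OF trivial_limit_at_right_real] by blast
      then have "ES M \<alpha> X \<le> ES M (\<Lambda> y) X"
        using ES_mono[of \<alpha> "\<Lambda> y"] range[of y] \<open>0 < \<alpha>\<close> \<open>\<alpha> < \<Lambda> y\<close> by simp
      also have "\<dots> \<le> l"
        using right \<open>l < y\<close> by blast
      finally show "ES M \<alpha> X \<le> l" .
    qed
  qed
next
  assume "ES M (\<Lambda> l) X \<le> l"
  show "\<forall>x>l. ES M (\<Lambda> x) X \<le> l"
  proof (intro allI impI)
    fix x assume "l < x"
    then have "\<Lambda> x \<le> \<Lambda> l"
      using antimonoD[OF \<open>antimono \<Lambda>\<close>] by simp
    then have "ES M (\<Lambda> x) X \<le> ES M (\<Lambda> l) X"
      using ES_mono[of "\<Lambda> x" "\<Lambda> l"] range[of x] range[of l] by simp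
    with \<open>ES M (\<Lambda> l) X \<le> l\<close> show "ES M (\<Lambda> x) X \<le> l"
      by simp
  qed
qed

end

theorem proposition4:
  fixes M :: "'a measure"
    and \<Lambda> :: "real \<Rightarrow> real"
    and \<Theta> :: "'p::real_vector set"
    and f :: "'p \<Rightarrow> real ^ 'n \<Rightarrow> real"
    and L :: "'a \<Rightarrow> real ^ 'n"
    and l :: real
  assumes "prob_space M"
    and "atomless M"
    and "\<And>x. 0 \<le> \<Lambda> x \<and> \<Lambda> x \<le> 1"
    and "\<And>x y. x \<le> y \<Longrightarrow> \<Lambda> y \<le> \<Lambda> x"
    and "\<And>x. continuous (at_right x) \<Lambda>"
    and "convex \<Theta>"
    and "\<And>i. (\<lambda>\<omega>. L \<omega> $ i) \<in> Linf M"
    and "\<And>\<theta>. \<theta> \<in> \<Theta> \<Longrightarrow> (\<lambda>\<omega>. f \<theta> (L \<omega>)) \<in> Linf M"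
  shows "\<forall>\<theta>\<in>\<Theta>. (ES_Lambda M \<Lambda> (\<lambda>\<omega>. f \<theta> (L \<omega>)) \<le> l
            \<longleftrightarrow> ES M (\<Lambda> l) (\<lambda>\<omega>. f \<theta> (L \<omega>)) \<le> l)"
proof
  fix \<theta> assume "\<theta> \<in> \<Theta>"
  then obtain C where "(\<lambda>\<omega>. f \<theta> (L \<omega>)) \<in> borel_measurable M" "AE \<omega> in M. \<bar>f \<theta> (L \<omega>)\<bar> \<le> C"
    using assms(8) unfolding Linf_def by blast
  then interpret bounded_random_variable M "\<lambda>\<omega>. f \<theta> (L \<omega>)" C
    using assms(1) by (simp add: bounded_random_variable_def bounded_random_variable_axioms_def)
  show "ES_Lambda M \<Lambda> (\<lambda>\<omega>. f \<theta> (L \<omega>)) \<le> l \<longleftrightarrow> ES M (\<Lambda> l) (\<lambda>\<omega>. f \<theta> (L \<omega>)) \<le> l"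
  proof (rule ES_Lambda_le_iff)
    show "\<Lambda> x \<in> {0..1}" for x
      using assms(3) by simp
    show "antimono \<Lambda>"
      using assms(4) by (rule antimonoI)
    show "continuous (at_right x) \<Lambda>" for x
      by (rule assms(5))
  qed
qed

end
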